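(* Let $E$ be an arbitrary directed graph. Then every descending chain $U_1\supseteq U_2\supseteq\cdots$ of compact open invariant subsets of $G_E^{(0)}$ stabilizes. Moreover, every nonempty compact open invariant subset of $G_E^{(0)}$ contains a minimal one, i.e. a nonempty compact open invariant subset containing no strictly smaller nonempty compact open invariant subset.
   Context: For a directed graph $E$ (paths $\mu=\mu_1\cdots\mu_n$ with $r(\mu_i)=s(\mu_{i+1})$, $|\mu|=n$, $\mathrm{Path}(E)$ the finite paths including vertices, $E^\infty$ infinite paths, sinks = vertices emitting no edges, $\mathrm{Inf}(E)$ = vertices emitting infinitely many edges), let $X=E^\infty\cup\{\mu\in\mathrm{Path}(E): r(\mu)\text{ a sink}\}\cup\{\mu: r(\mu)\in\mathrm{Inf}(E)\}$ and $G_E=\{(\alpha x,|\alpha|-|\beta|,\beta x):\alpha,\beta\in\mathrm{Path}(E),x\in X,r(\alpha)=r(\beta)=s(x)\}$, with product $(x,k,y)(y,l,z)=(x,k+l,z)$, inverse $(y,-k,x)$, range $(x,0,x)$, source $(y,0,y)$; unit space $G_E^{(0)}=\{(x,0,x)\}\cong X$, topologized by the basis of compact open sets $Z(\mu)\setminus\bigcup_{e\in F}Z(\mu e)$ with $Z(\mu)=\{\mu x:x\in X,s(x)=r(\mu)\}$ and $F\subseteq s^{-1}(r(\mu))$ finite. $U\subseteq G_E^{(0)}$ is invariant if for every $\gamma\in G_E$, $s(\gamma)\in U$ iff $r(\gamma)\in U$. *)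

theory Defs
  imports "HOL-Analysis.Analysis"
begin

text \<open>Paths are represented by
the datatype below: FinP v es is the finite path starting at the vertex v and
traversing the edge list es (FinP v [] is the vertex v itself, of length 0);
InfP f is the infinite path f 0 f 1 f 2 ...\<close>

datatype ('v,'e) gpath = FinP 'v "'e list" | InfP "nat \<Rightarrow> 'e"

definition is_graph :: "'v set \<Rightarrow> 'e set \<Rightarrow> ('e \<Rightarrow> 'v) \<Rightarrow> ('e \<Rightarrow> 'v) \<Rightarrow> bool" where
  "is_graph V Ed src rng \<longleftrightarrow> src ` Ed \<subseteq> V \<and> rng ` Ed \<subseteq> V"

definition fin_paths :: "'v set \<Rightarrow> 'e set \<Rightarrow> ('e \<Rightarrow> 'v) \<Rightarrow> ('e \<Rightarrow> 'v) \<Rightarrow> ('v,'e) gpath set" where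
  "fin_paths V Ed src rng = {FinP v es | v es. v \<in> V \<and> set es \<subseteq> Ed
      \<and> (es \<noteq> [] \<longrightarrow> src (es ! 0) = v)
      \<and> (\<forall>i. Suc i < length es \<longrightarrow> rng (es ! i) = src (es ! Suc i))}"

definition inf_paths :: "'e set \<Rightarrow> ('e \<Rightarrow> 'v) \<Rightarrow> ('e \<Rightarrow> 'v) \<Rightarrow> ('v,'e) gpath set" where
  "inf_paths Ed src rng = {InfP f | f. \<forall>i. f i \<in> Ed \<and> rng (f i) = src (f (Suc i))}"

fun gp_len :: "('v,'e) gpath \<Rightarrow> nat" where
  "gp_len (FinP v es) = length es"
| "gp_len (InfP f) = 0"  (* only used for finite paths *)

fun gp_src :: "('e \<Rightarrow> 'v) \<Rightarrow> ('v,'e) gpath \<Rightarrow> 'v" where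
  "gp_src src (FinP v es) = v"
| "gp_src src (InfP f) = src (f 0)"

fun gp_rng :: "('e \<Rightarrow> 'v) \<Rightarrow> ('v,'e) gpath \<Rightarrow> 'v" where
  "gp_rng rng (FinP v es) = (if es = [] then v else rng (last es))"
| "gp_rng rng (InfP f) = undefined"

fun gp_cat :: "('v,'e) gpath \<Rightarrow> ('v,'e) gpath \<Rightarrow> ('v,'e) gpath" where
  "gp_cat (FinP v es) (FinP w fs) = FinP v (es @ fs)"
| "gp_cat (FinP v es) (InfP f) = InfP (\<lambda>n. if n < length es then es ! n else f (n - length es))"
| "gp_cat (InfP f) y = InfP f"

definition sinks :: "'v set \<Rightarrow> 'e set \<Rightarrow> ('e \<Rightarrow> 'v) \<Rightarrow> 'v set" where
  "sinks V Ed src = {v \<in> V. \<forall>e\<in>Ed. src e \<noteq> v}"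

definition inf_emitters :: "'v set \<Rightarrow> 'e set \<Rightarrow> ('e \<Rightarrow> 'v) \<Rightarrow> 'v set" where
  "inf_emitters V Ed src = {v \<in> V. infinite {e \<in> Ed. src e = v}}"

definition bpaths :: "'v set \<Rightarrow> 'e set \<Rightarrow> ('e \<Rightarrow> 'v) \<Rightarrow> ('e \<Rightarrow> 'v) \<Rightarrow> ('v,'e) gpath set" where
  "bpaths V Ed src rng = inf_paths Ed src rng
     \<union> {\<mu> \<in> fin_paths V Ed src rng. gp_rng rng \<mu> \<in> sinks V Ed src}
     \<union> {\<mu> \<in> fin_paths V Ed src rng. gp_rng rng \<mu> \<in> inf_emitters V Ed src}"

definition graph_groupoid :: "'v set \<Rightarrow> 'e set \<Rightarrow> ('e \<Rightarrow> 'v) \<Rightarrow> ('e \<Rightarrow> 'v)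
    \<Rightarrow> (('v,'e) gpath \<times> int \<times> ('v,'e) gpath) set" where
  "graph_groupoid V Ed src rng =
     {(gp_cat \<alpha> x, int (gp_len \<alpha>) - int (gp_len \<beta>), gp_cat \<beta> x) | \<alpha> \<beta> x.
        \<alpha> \<in> fin_paths V Ed src rng \<and> \<beta> \<in> fin_paths V Ed src rng \<and> x \<in> bpaths V Ed src rng
        \<and> gp_rng rng \<alpha> = gp_src src x \<and> gp_rng rng \<beta> = gp_src src x}"

text \<open>Cylinder sets Z(mu) in X (unit space identified with X via (x,0,x) <-> x).\<close>
definition cyl :: "'v set \<Rightarrow> 'e set \<Rightarrow> ('e \<Rightarrow> 'v) \<Rightarrow> ('e \<Rightarrow> 'v) \<Rightarrow> ('v,'e) gpath
    \<Rightarrow> ('v,'e) gpath set" where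
  "cyl V Ed src rng \<mu> = {gp_cat \<mu> x | x. x \<in> bpaths V Ed src rng \<and> gp_src src x = gp_rng rng \<mu>}"

definition cyl_basis :: "'v set \<Rightarrow> 'e set \<Rightarrow> ('e \<Rightarrow> 'v) \<Rightarrow> ('e \<Rightarrow> 'v) \<Rightarrow> ('v,'e) gpath set set" where
  "cyl_basis V Ed src rng =
     {cyl V Ed src rng \<mu> - (\<Union>e\<in>F. cyl V Ed src rng (gp_cat \<mu> (FinP (src e) [e]))) | \<mu> F.
        \<mu> \<in> fin_paths V Ed src rng \<and> finite F \<and> F \<subseteq> {e \<in> Ed. src e = gp_rng rng \<mu>}}"

definition unit_topology :: "'v set \<Rightarrow> 'e set \<Rightarrow> ('e \<Rightarrow> 'v) \<Rightarrow> ('e \<Rightarrow> 'v) \<Rightarrow> ('v,'e) gpath topology" where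
  "unit_topology V Ed src rng = topology_generated_by (cyl_basis V Ed src rng)"

definition invariant :: "'v set \<Rightarrow> 'e set \<Rightarrow> ('e \<Rightarrow> 'v) \<Rightarrow> ('e \<Rightarrow> 'v) \<Rightarrow> ('v,'e) gpath set \<Rightarrow> bool" where
  "invariant V Ed src rng U \<longleftrightarrow>
     (\<forall>(x,k,y) \<in> graph_groupoid V Ed src rng. y \<in> U \<longleftrightarrow> x \<in> U)"

definition cpt_open_inv :: "'v set \<Rightarrow> 'e set \<Rightarrow> ('e \<Rightarrow> 'v) \<Rightarrow> ('e \<Rightarrow> 'v) \<Rightarrow> ('v,'e) gpath set \<Rightarrow> bool" where
  "cpt_open_inv V Ed src rng U \<longleftrightarrow> U \<subseteq> bpaths V Ed src rng
     \<and> compactin (unit_topology V Ed src rng) U \<and> openin (unit_topology V Ed src rng) U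
     \<and> invariant V Ed src rng U"

end

theory Submission
  imports Defs
begin

text \<open>A compact open invariant set U is determined by two finite sets of vertices: the vertices v
whose whole cylinder Z(v) lies in U, and the vertices v that are themselves points of U. Indeed, an
infinite path in the open set U has a prefix \<mu> with Z(\<mu>) \<subseteq> U, and invariance moves Z(\<mu>) onto
Z(r(\<mu>)); a boundary path \<mu> ending in a sink or infinite emitter is equivalent to the vertex r(\<mu>).
Compactness makes both sets finite, since U is covered by the disjoint open cylinders Z(v). Hence
the sum of their cardinalities strictly increases along strict inclusions, which gives both the
descending chain condition and the existence of minimal elements.\<close>

context
  fixes V :: "'v set" and Ed :: "'e set" and src rng :: "'e \<Rightarrow> 'v"
begin

abbreviation "Paths \<equiv> fin_paths V Ed src rng"
abbreviation "InfPaths \<equiv> inf_paths Ed src rng"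
abbreviation "X \<equiv> bpaths V Ed src rng"
abbreviation "Z \<equiv> cyl V Ed src rng"

lemma FinP_in_Paths_iff:
  "FinP v es \<in> Paths \<longleftrightarrow> v \<in> V \<and> set es \<subseteq> Ed \<and> (es \<noteq> [] \<longrightarrow> src (hd es) = v)
     \<and> successively (\<lambda>e e'. rng e = src e') es"
  by (auto simp: fin_paths_def successively_conv_nth hd_conv_nth)

lemma gp_cat_in_Paths:
  assumes "FinP v es \<in> Paths" "FinP w fs \<in> Paths" "gp_rng rng (FinP v es) = w"
  shows "gp_cat (FinP v es) (FinP w fs) \<in> Paths"
  using assms by (auto simp: FinP_in_Paths_iff successively_append_iff hd_append split: if_splits)

lemma InfP_in_InfPaths_iff:
  "InfP f \<in> InfPaths \<longleftrightarrow> (\<forall>i. f i \<in> Ed \<and> rng (f i) = src (f (Suc i)))"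
  by (simp add: inf_paths_def)

lemma gp_cat_in_InfPaths:
  assumes "FinP v es \<in> Paths" "InfP f \<in> InfPaths" "gp_rng rng (FinP v es) = src (f 0)"
  shows "gp_cat (FinP v es) (InfP f) \<in> InfPaths"
  unfolding gp_cat.simps InfP_in_InfPaths_iff
proof (intro allI conjI)
  fix i
  have es: "set es \<subseteq> Ed" "successively (\<lambda>e e'. rng e = src e') es"
    and f: "\<forall>i. f i \<in> Ed \<and> rng (f i) = src (f (Suc i))"
    using assms(1,2) by (auto simp: FinP_in_Paths_iff InfP_in_InfPaths_iff)
  show "(if i < length es then es ! i else f (i - length es)) \<in> Ed"
    using es f by auto
  consider "Suc i < length es" | "Suc i = length es" | "length es \<le> i" by linarith
  then show "rng (if i < length es then es ! i else f (i - length es)) =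
      src (if Suc i < length es then es ! Suc i else f (Suc i - length es))"
  proof cases
    case 1 then show ?thesis using successively_nth[OF es(2)] by simp
  next
    case 2 then show ?thesis using assms(3) by (cases es rule: rev_cases) auto
  next
    case 3 then show ?thesis using f by (simp add: Suc_diff_le)
  qed
qed

lemma InfP_notin_Paths [simp]: "InfP f \<notin> Paths"
  by (auto simp: fin_paths_def)

lemma FinP_notin_InfPaths [simp]: "FinP v es \<notin> InfPaths"
  by (auto simp: inf_paths_def)

lemma PathsE:
  assumes "\<mu> \<in> Paths"
  obtains v es where "\<mu> = FinP v es"
  using assms by (auto simp: fin_paths_def)

lemma vertex_in_Paths_iff [simp]: "FinP v [] \<in> Paths \<longleftrightarrow> v \<in> V"
  by (simp add: FinP_in_Paths_iff)

lemma gp_cat_vertex [simp]: "gp_cat (FinP (gp_src src y) []) y = y"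
  by (cases y) auto

lemma gp_cat_assoc:
  "gp_cat (FinP u (es @ fs)) z = gp_cat (FinP u es) (gp_cat (FinP w fs) z)"
  by (cases z) (auto simp: nth_append fun_eq_iff)

lemma gp_src_gp_cat:
  assumes "\<mu> \<in> Paths" "gp_rng rng \<mu> = gp_src src y"
  shows "gp_src src (gp_cat \<mu> y) = gp_src src \<mu>"
proof -
  obtain v es where "\<mu> = FinP v es" using assms(1) by (rule PathsE)
  with assms show ?thesis by (cases y) (auto simp: FinP_in_Paths_iff hd_conv_nth)
qed

lemma gp_cat_in_X:
  assumes "\<mu> \<in> Paths" "y \<in> X" "gp_rng rng \<mu> = gp_src src y"
  shows "gp_cat \<mu> y \<in> X"
proof -
  obtain v es where \<mu>: "\<mu> = FinP v es" using assms(1) by (rule PathsE)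
  show ?thesis
  proof (cases y)
    case (FinP w fs)
    have "gp_rng rng (gp_cat \<mu> y) = gp_rng rng y"
      using assms(3) \<mu> FinP by auto
    with assms show ?thesis
      using gp_cat_in_Paths \<mu> FinP by (auto simp: bpaths_def)
  next
    case (InfP f)
    with assms show ?thesis
      using gp_cat_in_InfPaths \<mu> by (auto simp: bpaths_def)
  qed
qed

lemma gp_src_in_V:
  assumes "is_graph V Ed src rng" "x \<in> X"
  shows "gp_src src x \<in> V"
  using assms by (auto simp: bpaths_def is_graph_def inf_paths_def fin_paths_def)

lemma cyl_vertex: "Z (FinP w []) = {x \<in> X. gp_src src x = w}"
  unfolding cyl_def by (metis (opaque_lifting) gp_cat_vertex gp_rng.simps(1))

lemma cyl_gp_cat_subset:
  assumes "\<mu> \<in> Paths" "\<nu> \<in> Paths" "gp_rng rng \<mu> = gp_src src \<nu>"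
  shows "Z (gp_cat \<mu> \<nu>) \<subseteq> Z \<mu>"
proof
  obtain u es where \<mu>: "\<mu> = FinP u es" using assms(1) by (rule PathsE)
  obtain w fs where \<nu>: "\<nu> = FinP w fs" using assms(2) by (rule PathsE)
  fix x assume "x \<in> Z (gp_cat \<mu> \<nu>)"
  then obtain z where z: "x = gp_cat (gp_cat \<mu> \<nu>) z" "z \<in> X"
      "gp_src src z = gp_rng rng (gp_cat \<mu> \<nu>)"
    by (auto simp: cyl_def)
  have "gp_rng rng \<nu> = gp_src src z"
    using z(3) assms(3) \<mu> \<nu> by auto
  then have "gp_cat \<nu> z \<in> X" "gp_src src (gp_cat \<nu> z) = gp_rng rng \<mu>"
    using gp_cat_in_X gp_src_gp_cat assms z(2) by auto
  moreover have "x = gp_cat \<mu> (gp_cat \<nu> z)"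
    using z(1) \<mu> \<nu> gp_cat_assoc by simp
  ultimately show "x \<in> Z \<mu>" by (auto simp: cyl_def)
qed

lemma invariant_gp_cat_iff:
  assumes "is_graph V Ed src rng" "invariant V Ed src rng U"
    and "\<mu> \<in> Paths" "z \<in> X" "gp_rng rng \<mu> = gp_src src z"
  shows "gp_cat \<mu> z \<in> U \<longleftrightarrow> z \<in> U"
proof -
  let ?w = "FinP (gp_src src z) []"
  have "?w \<in> Paths" using gp_src_in_V assms(1,4) by simp
  then have "(gp_cat \<mu> z, int (gp_len \<mu>) - int (gp_len ?w), gp_cat ?w z)
      \<in> graph_groupoid V Ed src rng"
    using assms(3-5) unfolding graph_groupoid_def
    by (intro CollectI exI[of _ \<mu>] exI[of _ ?w] exI[of _ z]) simp
  then show ?thesis using assms(2) by (auto simp: invariant_def)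
qed

fun gp_edge :: "('v,'e) gpath \<Rightarrow> nat \<Rightarrow> 'e option" where
  "gp_edge (FinP v es) i = (if i < length es then Some (es ! i) else None)"
| "gp_edge (InfP f) i = Some (f i)"

lemma gp_edge_gp_cat:
  "i < length es \<Longrightarrow> gp_edge (gp_cat (FinP v es) y) i = Some (es ! i)"
  by (cases y) (auto simp: nth_append)

lemma cyl_overlap_same_length_eq:
  assumes "\<mu> \<in> Paths" "\<nu> \<in> Paths" "gp_len \<mu> = gp_len \<nu>" "x \<in> Z \<mu>" "x \<in> Z \<nu>"
  shows "\<mu> = \<nu>"
proof -
  obtain u es where \<mu>: "\<mu> = FinP u es" using assms(1) by (rule PathsE)
  obtain w fs where \<nu>: "\<nu> = FinP w fs" using assms(2) by (rule PathsE)
  obtain y where y: "x = gp_cat \<mu> y" "gp_src src y = gp_rng rng \<mu>"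
    using assms(4) by (auto simp: cyl_def)
  obtain y' where y': "x = gp_cat \<nu> y'" "gp_src src y' = gp_rng rng \<nu>"
    using assms(5) by (auto simp: cyl_def)
  have "u = w"
    using gp_src_gp_cat[OF assms(1) y(2)[symmetric]] gp_src_gp_cat[OF assms(2) y'(2)[symmetric]]
      y(1) y'(1) \<mu> \<nu> by simp
  moreover have "es = fs"
  proof (rule nth_equalityI)
    show "length es = length fs" using assms(3) \<mu> \<nu> by simp
    show "es ! i = fs ! i" if "i < length es" for i
      using gp_edge_gp_cat[of i es u y] gp_edge_gp_cat[of i fs w y'] that y(1) y'(1) \<mu> \<nu>
        \<open>length es = length fs\<close> by simp
  qed
  ultimately show ?thesis using \<mu> \<nu> by simp
qed

lemma openin_cyl:
  assumes "\<mu> \<in> Paths"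
  shows "openin (unit_topology V Ed src rng) (Z \<mu>)"
proof -
  have "Z \<mu> \<in> cyl_basis V Ed src rng"
    using assms unfolding cyl_basis_def by force
  then show ?thesis unfolding unit_topology_def by (rule topology_generated_by_Basis)
qed

definition inf_prefix :: "(nat \<Rightarrow> 'e) \<Rightarrow> nat \<Rightarrow> ('v,'e) gpath" where
  "inf_prefix f n = FinP (src (f 0)) (map f [0..<n])"

lemma inf_prefix_in_Paths:
  assumes "is_graph V Ed src rng" "InfP f \<in> InfPaths"
  shows "inf_prefix f n \<in> Paths"
  using assms by (auto simp: InfP_in_InfPaths_iff FinP_in_Paths_iff inf_prefix_def is_graph_def
      successively_map hd_map successively_conv_nth)

lemma gp_rng_inf_prefix:
  assumes "InfP f \<in> InfPaths"
  shows "gp_rng rng (inf_prefix f n) = src (f n)"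
  using assms by (cases n) (auto simp: inf_prefix_def InfP_in_InfPaths_iff)

lemma gp_src_inf_prefix [simp]: "gp_src src (inf_prefix f n) = src (f 0)"
  by (simp add: inf_prefix_def)

lemma InfP_shift_in_InfPaths:
  "InfP f \<in> InfPaths \<Longrightarrow> InfP (\<lambda>i. f (i + n)) \<in> InfPaths"
  by (simp add: InfP_in_InfPaths_iff)

lemma InfP_eq_gp_cat_inf_prefix: "InfP f = gp_cat (inf_prefix f n) (InfP (\<lambda>i. f (i + n)))"
  by (auto simp: inf_prefix_def fun_eq_iff)

lemma inf_prefix_add:
  "inf_prefix f (n + k) = gp_cat (inf_prefix f n) (inf_prefix (\<lambda>i. f (i + n)) k)"
  by (simp add: inf_prefix_def) (rule nth_equalityI; auto simp: nth_append)

lemma InfP_in_cyl_inf_prefix: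
  assumes "InfP f \<in> InfPaths"
  shows "InfP f \<in> Z (inf_prefix f n)"
  using InfP_eq_gp_cat_inf_prefix[of f n] InfP_shift_in_InfPaths[OF assms, of n] gp_rng_inf_prefix[OF assms]
  unfolding cyl_def bpaths_def by auto

lemma cyl_inf_prefix_antimono:
  assumes "is_graph V Ed src rng" "InfP f \<in> InfPaths" "n \<le> m"
  shows "Z (inf_prefix f m) \<subseteq> Z (inf_prefix f n)"
proof -
  have "InfP (\<lambda>i. f (i + n)) \<in> InfPaths" using InfP_shift_in_InfPaths[OF assms(2)] .
  then have "Z (gp_cat (inf_prefix f n) (inf_prefix (\<lambda>i. f (i + n)) (m - n))) \<subseteq> Z (inf_prefix f n)"
    using assms by (intro cyl_gp_cat_subset inf_prefix_in_Paths) (simp_all add: gp_rng_inf_prefix)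
  then show ?thesis using inf_prefix_add[of f n "m - n"] assms(3) by simp
qed

lemma basic_open_contains_cyl_inf_prefix:
  assumes G: "is_graph V Ed src rng" and f: "InfP f \<in> InfPaths"
    and \<mu>: "\<mu> \<in> Paths" and F: "F \<subseteq> {e \<in> Ed. src e = gp_rng rng \<mu>}"
    and in_basic: "InfP f \<in> Z \<mu> - (\<Union>e\<in>F. Z (gp_cat \<mu> (FinP (src e) [e])))"
  shows "Z (inf_prefix f (Suc (gp_len \<mu>))) \<subseteq> Z \<mu> - (\<Union>e\<in>F. Z (gp_cat \<mu> (FinP (src e) [e])))"
proof -
  let ?L = "gp_len \<mu>"
  have \<mu>_eq: "\<mu> = inf_prefix f ?L"
    using cyl_overlap_same_length_eq[OF \<mu> inf_prefix_in_Paths[OF G f] _ _ InfP_in_cyl_inf_prefix[OF f]] in_basic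
    by (simp add: inf_prefix_def)
  \<comment> \<open>The prefix of length |\<mu>| + 1 fixes the edge after \<mu> to be f |\<mu>|, which is not in F.\<close>
  have "x \<notin> Z (gp_cat \<mu> (FinP (src e) [e]))"
    if x: "x \<in> Z (inf_prefix f (Suc ?L))" and e: "e \<in> F" for x e
  proof
    assume x': "x \<in> Z (gp_cat \<mu> (FinP (src e) [e]))"
    have "FinP (src e) [e] \<in> Paths" using e F G by (auto simp: FinP_in_Paths_iff is_graph_def)
    moreover obtain v es where "\<mu> = FinP v es" using \<mu> by (rule PathsE)
    ultimately have "gp_cat \<mu> (FinP (src e) [e]) \<in> Paths"
      using \<mu> e F gp_cat_in_Paths by auto
    then have "gp_cat \<mu> (FinP (src e) [e]) = inf_prefix f (Suc ?L)"
      using cyl_overlap_same_length_eq[OF _ inf_prefix_in_Paths[OF G f] _ x' x] \<mu>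
      by (auto simp: inf_prefix_def elim!: PathsE)
    then show False using in_basic InfP_in_cyl_inf_prefix[OF f] e by auto
  qed
  moreover have "Z (inf_prefix f (Suc ?L)) \<subseteq> Z \<mu>"
    using cyl_inf_prefix_antimono[OF G f, of ?L "Suc ?L"] \<mu>_eq by simp
  ultimately show ?thesis by blast
qed

lemma open_contains_cyl_inf_prefix:
  assumes G: "is_graph V Ed src rng" and W: "openin (unit_topology V Ed src rng) W"
    and f: "InfP f \<in> InfPaths" "InfP f \<in> W"
  shows "\<exists>n. Z (inf_prefix f n) \<subseteq> W"
proof -
  have "generate_topology_on (cyl_basis V Ed src rng) W"
    using W by (simp add: unit_topology_def openin_topology_generated_by_iff)
  then show ?thesis using f(2)
  proof induction
    case (Int a b)
    then obtain n1 n2 where "Z (inf_prefix f n1) \<subseteq> a" "Z (inf_prefix f n2) \<subseteq> b" by blast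
    then have "Z (inf_prefix f (max n1 n2)) \<subseteq> a \<inter> b"
      using cyl_inf_prefix_antimono[OF G f(1)] by (meson le_inf_iff max.cobounded1 max.cobounded2 order_trans)
    then show ?case by blast
  next
    case (UN K)
    then show ?case by blast
  next
    case (Basis s)
    then obtain \<mu> F where "s = Z \<mu> - (\<Union>e\<in>F. Z (gp_cat \<mu> (FinP (src e) [e])))"
        "\<mu> \<in> Paths" "F \<subseteq> {e \<in> Ed. src e = gp_rng rng \<mu>}"
      unfolding cyl_basis_def by blast
    with Basis.prems show ?case
      using basic_open_contains_cyl_inf_prefix[OF G f(1)] by blast
  qed simp
qed

lemma compactin_finite_sources:
  assumes G: "is_graph V Ed src rng" and "U \<subseteq> X"
    and "compactin (unit_topology V Ed src rng) U"
  shows "finite (gp_src src ` U)"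
proof -
  have "\<forall>c \<in> (\<lambda>v. Z (FinP v [])) ` V. openin (unit_topology V Ed src rng) c"
    by (auto intro: openin_cyl)
  moreover have "U \<subseteq> \<Union> ((\<lambda>v. Z (FinP v [])) ` V)"
    using assms(2) gp_src_in_V[OF G] by (auto simp: cyl_vertex)
  ultimately obtain \<C> where "finite \<C>" "\<C> \<subseteq> (\<lambda>v. Z (FinP v [])) ` V" "U \<subseteq> \<Union>\<C>"
    using assms(3) unfolding compactin_def by blast
  then obtain S where S: "finite S" "U \<subseteq> (\<Union>v\<in>S. Z (FinP v []))"
    by (metis finite_subset_image)
  then have "gp_src src ` U \<subseteq> S" by (auto simp: cyl_vertex)
  then show ?thesis using S(1) finite_subset by blast
qed

text \<open>Requiring w to be the source of a point of U excludes vertices with empty cylinder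
(e.g. those outside V), which keeps this set finite for compact U.\<close>

definition full_vertices :: "('v,'e) gpath set \<Rightarrow> 'v set" where
  "full_vertices U = {w \<in> gp_src src ` U. Z (FinP w []) \<subseteq> U}"

definition vertices_in :: "('v,'e) gpath set \<Rightarrow> 'v set" where
  "vertices_in U = {w. FinP w [] \<in> U}"

lemma invariant_cyl_subset_vertex_cyl:
  assumes G: "is_graph V Ed src rng" and inv: "invariant V Ed src rng U"
    and \<mu>: "\<mu> \<in> Paths" and sub: "Z \<mu> \<subseteq> U"
  shows "Z (FinP (gp_rng rng \<mu>) []) \<subseteq> U"
proof
  fix z assume "z \<in> Z (FinP (gp_rng rng \<mu>) [])"
  then have z: "z \<in> X" "gp_rng rng \<mu> = gp_src src z" by (auto simp: cyl_vertex)
  then have "gp_cat \<mu> z \<in> U" using sub by (auto simp: cyl_def)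
  then show "z \<in> U" using invariant_gp_cat_iff[OF G inv \<mu> z] by simp
qed

lemma InfP_in_open_invariant_imp_full_vertex:
  assumes G: "is_graph V Ed src rng" and U: "openin (unit_topology V Ed src rng) U"
    "invariant V Ed src rng U"
    and f: "InfP f \<in> InfPaths" "InfP f \<in> U"
  shows "\<exists>n. src (f n) \<in> full_vertices U"
proof -
  obtain n where "Z (inf_prefix f n) \<subseteq> U" using open_contains_cyl_inf_prefix[OF G U(1) f] ..
  then have sub: "Z (FinP (src (f n)) []) \<subseteq> U"
    using invariant_cyl_subset_vertex_cyl[OF G U(2) inf_prefix_in_Paths[OF G f(1)]]
    by (simp add: gp_rng_inf_prefix[OF f(1)])
  have "InfP (\<lambda>i. f (i + n)) \<in> Z (FinP (src (f n)) [])"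
    using InfP_shift_in_InfPaths[OF f(1)] by (simp add: cyl_vertex bpaths_def)
  with sub have "InfP (\<lambda>i. f (i + n)) \<in> U" by blast
  then have "src (f n) \<in> gp_src src ` U" by (rule rev_image_eqI) simp
  with sub show ?thesis by (auto simp: full_vertices_def)
qed

lemma FinP_in_invariant_iff_vertex:
  assumes G: "is_graph V Ed src rng" and inv: "invariant V Ed src rng U"
    and x: "FinP v es \<in> X"
  shows "FinP v es \<in> U \<longleftrightarrow> gp_rng rng (FinP v es) \<in> vertices_in U"
proof -
  let ?w = "gp_rng rng (FinP v es)"
  have "FinP v es \<in> Paths" "?w \<in> sinks V Ed src \<union> inf_emitters V Ed src"
    using x by (auto simp: bpaths_def)
  moreover from this have "FinP ?w [] \<in> X"
    by (auto simp: bpaths_def sinks_def inf_emitters_def)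
  ultimately show ?thesis
    using invariant_gp_cat_iff[OF G inv, of "FinP v es" "FinP ?w []"] by (simp add: vertices_in_def)
qed

lemma open_invariant_subset_if_vertex_sets_subset:
  assumes G: "is_graph V Ed src rng"
    and U': "U' \<subseteq> X" "openin (unit_topology V Ed src rng) U'" "invariant V Ed src rng U'"
    and U: "invariant V Ed src rng U"
    and full: "full_vertices U' \<subseteq> full_vertices U" and vert: "vertices_in U' \<subseteq> vertices_in U"
  shows "U' \<subseteq> U"
proof
  fix x assume x: "x \<in> U'"
  show "x \<in> U"
  proof (cases x)
    case (InfP f)
    have f: "InfP f \<in> InfPaths" using x U'(1) InfP by (auto simp: bpaths_def)
    obtain n where "src (f n) \<in> full_vertices U"
      using InfP_in_open_invariant_imp_full_vertex[OF G U'(2,3) f] x InfP full by blast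
    then have "InfP (\<lambda>i. f (i + n)) \<in> U"
      using InfP_shift_in_InfPaths[OF f] by (auto simp: full_vertices_def cyl_vertex bpaths_def)
    then show ?thesis
      using invariant_gp_cat_iff[OF G U inf_prefix_in_Paths[OF G f], of "InfP (\<lambda>i. f (i + n))" n]
        InfP_shift_in_InfPaths[OF f] InfP_eq_gp_cat_inf_prefix[of f n] InfP
      by (simp add: gp_rng_inf_prefix[OF f] bpaths_def)
  next
    case (FinP v es)
    then show ?thesis
      using FinP_in_invariant_iff_vertex[OF G U'(3)] FinP_in_invariant_iff_vertex[OF G U]
        x U'(1) vert by blast
  qed
qed

lemma finite_vertex_sets:
  assumes "is_graph V Ed src rng" "U \<subseteq> X" "compactin (unit_topology V Ed src rng) U"
  shows "finite (full_vertices U)" "finite (vertices_in U)"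
proof -
  have "full_vertices U \<subseteq> gp_src src ` U" "vertices_in U \<subseteq> gp_src src ` U"
    by (auto simp: full_vertices_def vertices_in_def intro: rev_image_eqI)
  then show "finite (full_vertices U)" "finite (vertices_in U)"
    using compactin_finite_sources[OF assms] by (auto intro: finite_subset)
qed

definition vertex_rank :: "('v,'e) gpath set \<Rightarrow> nat" where
  "vertex_rank U = card (full_vertices U) + card (vertices_in U)"

lemma vertex_rank_strict_mono:
  assumes G: "is_graph V Ed src rng"
    and U: "cpt_open_inv V Ed src rng U" and U': "cpt_open_inv V Ed src rng U'" and "U \<subset> U'"
  shows "vertex_rank U < vertex_rank U'"
proof (rule ccontr)
  assume "\<not> vertex_rank U < vertex_rank U'"
  have sub: "full_vertices U \<subseteq> full_vertices U'" "vertices_in U \<subseteq> vertices_in U'"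
    using \<open>U \<subset> U'\<close> by (auto simp: full_vertices_def vertices_in_def)
  moreover have fin: "finite (full_vertices U')" "finite (vertices_in U')"
    using finite_vertex_sets[OF G] U' by (auto simp: cpt_open_inv_def)
  ultimately have "card (full_vertices U) \<le> card (full_vertices U')"
    "card (vertices_in U) \<le> card (vertices_in U')"
    by (auto intro: card_mono)
  with \<open>\<not> vertex_rank U < vertex_rank U'\<close>
  have "card (full_vertices U) = card (full_vertices U')" "card (vertices_in U) = card (vertices_in U')"
    by (auto simp: vertex_rank_def)
  then have "full_vertices U = full_vertices U'" "vertices_in U = vertices_in U'"
    using card_subset_eq fin sub by metis+
  then have "U' \<subseteq> U"
    using open_invariant_subset_if_vertex_sets_subset[OF G] U U' by (simp add: cpt_open_inv_def)
  with \<open>U \<subset> U'\<close> show False by blast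
qed

end

theorem lemma3p8:
  fixes V :: "'v set" and Ed :: "'e set" and src rng :: "'e \<Rightarrow> 'v"
  assumes "is_graph V Ed src rng"
  shows "(\<forall>U :: nat \<Rightarrow> ('v,'e) gpath set.
            (\<forall>n. cpt_open_inv V Ed src rng (U n)) \<and> (\<forall>n. U (Suc n) \<subseteq> U n)
            \<longrightarrow> (\<exists>N. \<forall>n\<ge>N. U n = U N))
       \<and> (\<forall>U. cpt_open_inv V Ed src rng U \<and> U \<noteq> {} \<longrightarrow>
            (\<exists>W. W \<subseteq> U \<and> W \<noteq> {} \<and> cpt_open_inv V Ed src rng W
                 \<and> (\<forall>W'. W' \<subset> W \<and> cpt_open_inv V Ed src rng W' \<longrightarrow> W' = {})))"
proof -
  let ?rank = "vertex_rank V Ed src rng"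
  have chain: "\<exists>N. \<forall>n\<ge>N. U n = U N"
    if U: "\<forall>n. cpt_open_inv V Ed src rng (U n)" and dec: "\<forall>n. U (Suc n) \<subseteq> U n"
    for U :: "nat \<Rightarrow> ('v,'e) gpath set"
  proof -
    obtain N where N: "\<forall>k. ?rank (U N) \<le> ?rank (U k)"
      using ex_has_least_nat[of "\<lambda>_. True" 0 "\<lambda>k. ?rank (U k)"] by blast
    have "\<not> U n \<subset> U N" for n
      using vertex_rank_strict_mono[OF assms U[rule_format] U[rule_format], of n N] N[rule_format, of n]
      by linarith
    moreover have "U n \<subseteq> U N" if "n \<ge> N" for n
      using lift_Suc_antimono_le[of U] dec that by blast
    ultimately show ?thesis by blast
  qed
  have minimal: "\<exists>W. W \<subseteq> U \<and> W \<noteq> {} \<and> cpt_open_inv V Ed src rng W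
      \<and> (\<forall>W'. W' \<subset> W \<and> cpt_open_inv V Ed src rng W' \<longrightarrow> W' = {})"
    if "cpt_open_inv V Ed src rng U" "U \<noteq> {}" for U
  proof -
    let ?P = "\<lambda>W. W \<subseteq> U \<and> W \<noteq> {} \<and> cpt_open_inv V Ed src rng W"
    have "\<exists>W. ?P W \<and> (\<forall>W'. ?P W' \<longrightarrow> ?rank W \<le> ?rank W')"
      by (rule ex_has_least_nat[of ?P U]) (use that in simp)
    then obtain W where W: "?P W" and least: "\<And>W'. ?P W' \<Longrightarrow> ?rank W \<le> ?rank W'"
      by blast
    have "W' = {}" if "W' \<subset> W" "cpt_open_inv V Ed src rng W'" for W'
    proof (rule ccontr)
      assume "W' \<noteq> {}"
      with that W have "?rank W \<le> ?rank W'" by (intro least) auto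
      with vertex_rank_strict_mono[OF assms that(2) _ that(1)] W show False by simp
    qed
    with W show ?thesis by blast
  qed
  show ?thesis using chain minimal by auto
qed

end
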